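(* Let $h,v$ be permutations of $\Lambda=\{1,\dots,d\}$ such that $\langle h,v\rangle$ acts transitively on $\Lambda$. Then for every integer $M\ge0$ the graph $\Gamma^M$ is strongly connected.
   Context: $\Gamma^M=\Gamma^M_{h,v}$ is the directed multigraph with vertex set $\Lambda$ in which each vertex $\lambda$ has exactly two outgoing edges: one labeled $L$ to $vh^M(\lambda)$ and one labeled $R$ to $vh^{M+1}(\lambda)$. *)

theory Defs
  imports "HOL-Combinatorics.Permutations"
begin

inductive_set gen_group :: "('a \<Rightarrow> 'a) \<Rightarrow> ('a \<Rightarrow> 'a) \<Rightarrow> ('a \<Rightarrow> 'a) set"
  for h v where
  gen_id: "id \<in> gen_group h v"
| gen_h: "g \<in> gen_group h v \<Longrightarrow> h \<circ> g \<in> gen_group h v"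
| gen_v: "g \<in> gen_group h v \<Longrightarrow> v \<circ> g \<in> gen_group h v"
| gen_inv_h: "g \<in> gen_group h v \<Longrightarrow> inv h \<circ> g \<in> gen_group h v"
| gen_inv_v: "g \<in> gen_group h v \<Longrightarrow> inv v \<circ> g \<in> gen_group h v"

definition acts_transitively :: "('a \<Rightarrow> 'a) set \<Rightarrow> 'a set \<Rightarrow> bool" where
  "acts_transitively G A \<longleftrightarrow> (\<forall>x\<in>A. \<forall>y\<in>A. \<exists>g\<in>G. g x = y)"

text \<open>Edge relation of Gamma^M_{h,v} on vertex set A: from lambda an L-edge to
v(h^M lambda) and an R-edge to v(h^(M+1) lambda).  Labels/multiplicities are
irrelevant for strong connectivity.\<close>
definition Gamma_edges :: "'a set \<Rightarrow> ('a \<Rightarrow> 'a) \<Rightarrow> ('a \<Rightarrow> 'a) \<Rightarrow> nat \<Rightarrow> ('a \<times> 'a) set" where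
  "Gamma_edges A h v M =
     {(x, y). x \<in> A \<and> (y = v ((h ^^ M) x) \<or> y = v ((h ^^ (M + 1)) x))}"

definition strongly_connected :: "'a set \<Rightarrow> ('a \<times> 'a) set \<Rightarrow> bool" where
  "strongly_connected A E \<longleftrightarrow> (\<forall>x\<in>A. \<forall>y\<in>A. (x, y) \<in> E\<^sup>*)"

end

theory Submission
  imports Defs "HOL-Combinatorics.Cycles"
begin

text \<open>Write f = v h^M and g = v h^(M+1), so that the edges of Gamma^M are x \<rightarrow> f x and
x \<rightarrow> g x. Call a permutation p of A walkable if every x \<in> A reaches p x by a path.
Walkable permutations are closed under composition and, since p^n = id for some n > 0
on a finite set, also under inversion. As f and g are walkable, so are h = f\<inverse> g and
v = f h^-M; hence every element of \<langle>h,v\<rangle> is walkable, and transitivity of \<langle>h,v\<rangle>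
yields strong connectivity.\<close>

definition walkable :: "('a \<times> 'a) set \<Rightarrow> 'a set \<Rightarrow> ('a \<Rightarrow> 'a) \<Rightarrow> bool" where
  "walkable E A p \<longleftrightarrow> (\<forall>x\<in>A. (x, p x) \<in> E\<^sup>*)"

lemma walkable_id: "walkable E A id"
  by (simp add: walkable_def)

lemma walkable_comp:
  assumes "walkable E A p" "walkable E A q" "q ` A \<subseteq> A"
  shows "walkable E A (p \<circ> q)"
  using assms unfolding walkable_def by (metis comp_apply image_subset_iff rtrancl_trans)

lemma walkable_funpow:
  assumes "walkable E A p" "p ` A \<subseteq> A"
  shows "walkable E A (p ^^ n)"
proof (induction n)
  case 0
  show ?case unfolding funpow.simps(1) by (rule walkable_id)
next
  case (Suc n)
  have "(p ^^ n) ` A \<subseteq> A"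
    using assms(2) by (induction n) auto
  then show ?case
    using walkable_comp[OF assms(1) Suc] by (simp only: funpow.simps)
qed

lemma walkable_inv:
  assumes "p permutes A" "finite A" "walkable E A p"
  shows "walkable E A (inv p)"
  unfolding walkable_def
proof
  fix x assume "x \<in> A"
  obtain n where n: "p ^^ n = id" "n > 0"
    using permutation_is_nilpotent permutation_permutes assms(1,2) by metis
  then obtain m where "n = Suc m"
    using gr0_conv_Suc by blast
  then have cycle: "(p ^^ m) (p y) = y" for y
    using n(1) by (metis comp_apply funpow_Suc_right id_apply)
  have "p ` A \<subseteq> A"
    using permutes_image[OF assms(1)] by simp
  then have "walkable E A (p ^^ m)"
    by (rule walkable_funpow[OF assms(3)])
  then have "(x, (p ^^ m) x) \<in> E\<^sup>*"
    using \<open>x \<in> A\<close> unfolding walkable_def by blast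
  moreover have "(p ^^ m) x = inv p x"
    using cycle[of "inv p x"] unfolding permutes_inverses(1)[OF assms(1)] .
  ultimately show "(x, inv p x) \<in> E\<^sup>*"
    by simp
qed

lemma gen_group_permutes:
  assumes "h permutes A" "v permutes A" "g \<in> gen_group h v"
  shows "g permutes A"
  using assms(3)
proof induction
  case gen_id
  show ?case by (simp only: permutes_id)
next
  case (gen_h g)
  show ?case by (rule permutes_compose[OF gen_h.IH assms(1)])
next
  case (gen_v g)
  show ?case by (rule permutes_compose[OF gen_v.IH assms(2)])
next
  case (gen_inv_h g)
  show ?case by (rule permutes_compose[OF gen_inv_h.IH permutes_inv[OF assms(1)]])
next
  case (gen_inv_v g)
  show ?case by (rule permutes_compose[OF gen_inv_v.IH permutes_inv[OF assms(2)]])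
qed

lemma gen_group_walkable:
  assumes "finite A" "h permutes A" "v permutes A"
    and "walkable E A h" "walkable E A v" "g \<in> gen_group h v"
  shows "walkable E A g"
  using assms(6)
proof induction
  case gen_id
  show ?case by (rule walkable_id)
next
  case (gen_h g)
  show ?case
    by (rule walkable_comp[OF assms(4) gen_h.IH])
      (simp add: permutes_image[OF gen_group_permutes[OF assms(2,3) gen_h.hyps]])
next
  case (gen_v g)
  show ?case
    by (rule walkable_comp[OF assms(5) gen_v.IH])
      (simp add: permutes_image[OF gen_group_permutes[OF assms(2,3) gen_v.hyps]])
next
  case (gen_inv_h g)
  show ?case
    by (rule walkable_comp[OF walkable_inv[OF assms(2,1,4)] gen_inv_h.IH])
      (simp add: permutes_image[OF gen_group_permutes[OF assms(2,3) gen_inv_h.hyps]])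
next
  case (gen_inv_v g)
  show ?case
    by (rule walkable_comp[OF walkable_inv[OF assms(3,1,5)] gen_inv_v.IH])
      (simp add: permutes_image[OF gen_group_permutes[OF assms(2,3) gen_inv_v.hyps]])
qed

lemma strongly_connected_if_generators_walkable:
  assumes "finite A" "h permutes A" "v permutes A" "acts_transitively (gen_group h v) A"
    and "walkable E A h" "walkable E A v"
  shows "strongly_connected A E"
  unfolding strongly_connected_def
proof (intro ballI)
  fix x y assume "x \<in> A" "y \<in> A"
  then obtain g where "g \<in> gen_group h v" "g x = y"
    using assms(4) unfolding acts_transitively_def by blast
  then show "(x, y) \<in> E\<^sup>*"
    using gen_group_walkable[OF assms(1-3,5,6)] \<open>x \<in> A\<close> unfolding walkable_def by blast
qed

lemma Gamma_generators_walkable: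
  assumes "finite A" "h permutes A" "v permutes A"
  shows "walkable (Gamma_edges A h v M) A h" and "walkable (Gamma_edges A h v M) A v"
proof -
  let ?E = "Gamma_edges A h v M"
  define f where "f = v \<circ> h ^^ M"
  have hM: "h ^^ M permutes A"
    using permutes_funpow[OF assms(2)] .
  have f: "f permutes A"
    unfolding f_def using permutes_compose[OF hM assms(3)] .
  have f_walkable: "walkable ?E A f"
    unfolding walkable_def f_def Gamma_edges_def by auto
  have step_R: "(x, f (h x)) \<in> ?E" if "x \<in> A" for x
    using that unfolding f_def Gamma_edges_def by (simp add: funpow_swap1)
  show h_walkable: "walkable ?E A h"
    unfolding walkable_def
  proof
    fix x assume x: "x \<in> A"
    have "f (h x) \<in> A"
      using x permutes_in_image[OF f] permutes_in_image[OF assms(2)] by simp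
    then have "(f (h x), inv f (f (h x))) \<in> ?E\<^sup>*"
      using walkable_inv[OF f assms(1) f_walkable] unfolding walkable_def by blast
    then show "(x, h x) \<in> ?E\<^sup>*"
      using step_R[OF x] unfolding permutes_inverses(2)[OF f]
      by (rule converse_rtrancl_into_rtrancl[rotated])
  qed
  have "walkable ?E A (f \<circ> inv (h ^^ M))"
    using walkable_comp[OF f_walkable] walkable_inv[OF hM assms(1)]
      walkable_funpow[OF h_walkable] permutes_image[OF assms(2)]
      permutes_image[OF permutes_inv[OF hM]] by simp
  moreover have "f \<circ> inv (h ^^ M) = v"
    unfolding f_def using permutes_inverses(1)[OF hM] by (auto simp: fun_eq_iff)
  ultimately show "walkable ?E A v"
    by simp
qed

theorem lemma5p2:
  fixes d :: nat and h v :: "nat \<Rightarrow> nat"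
  assumes "h permutes {1..d}" and "v permutes {1..d}"
    and "acts_transitively (gen_group h v) {1..d}"
  shows "\<forall>M::nat. strongly_connected {1..d} (Gamma_edges {1..d} h v M)"
  using strongly_connected_if_generators_walkable[OF finite_atLeastAtMost assms
      Gamma_generators_walkable[OF finite_atLeastAtMost assms(1,2)]] by blast

end
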